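(* Let $A\subseteq\mathbb{N}$ with $\operatorname{BD}(A)=\alpha>0$, and let $(I_n)$ be a sequence of intervals $I_n=[a_n,b_n]\subseteq\mathbb{N}$ with $|I_n|\to\infty$ and $\lim_{n\to\infty}\frac{|A\cap I_n|}{|I_n|}=\alpha$. Then there is $L\subseteq\mathbb{N}$ such that (i) $\limsup_{n\to\infty}\frac{|L\cap I_n|}{|I_n|}\ge\alpha$, and (ii) for every finite $F\subseteq L$, the set $A\cap\bigcap_{x\in F}(A-x)$ is infinite.
   Context: $\mathbb{N}=\{1,2,3,\dots\}$; $[a,b]=\{c\in\mathbb{N}:a\le c\le b\}$; $A-x=\{a-x: a\in A\}$. The (upper) Banach density of $A\subseteq\mathbb{N}$ is $\operatorname{BD}(A)=\lim_{n\to\infty}\sup_{m\in\mathbb{N}}\frac{|A\cap[m,m+n]|}{n}$. *)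

theory Defs
  imports "HOL-Analysis.Analysis"
begin

text \<open>N = {1,2,...} is represented inside nat by requiring elements to be \<ge> 1.\<close>

definition has_banach_density :: "nat set \<Rightarrow> real \<Rightarrow> bool" where
  "has_banach_density A \<alpha> \<longleftrightarrow>
     ((\<lambda>n::nat. SUP m\<in>{1::nat..}. real (card (A \<inter> {m..m+n})) / real n) \<longlongrightarrow> \<alpha>) sequentially"

definition shift_set :: "nat set \<Rightarrow> nat \<Rightarrow> nat set" where
  "shift_set A x = {y. y \<ge> 1 \<and> y + x \<in> A}"

end

theory Submission
  imports Defs
begin

text \<open>
  We build sets \<open>A = S 0 \<supseteq> S 1 \<supseteq> \<dots>\<close> of positive upper density along the intervals
  \<open>I m = [a m, b m]\<close> such that the pattern \<open>(A - t) \<inter> [0, M k]\<close> is the same for all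
  \<open>t \<in> S k\<close>. Since \<open>BD(A) = \<alpha>\<close>, no translate \<open>(A - t) \<inter> I n\<close> has much more than
  \<open>\<alpha> |I n|\<close> elements once \<open>I n\<close> is long, while \<open>A\<close> has density close to \<open>\<alpha>\<close> in \<open>I m\<close>
  for large \<open>m\<close>; double counting shows that few \<open>t \<in> I m\<close> have
  \<open>|(A - t) \<inter> I n| < (\<alpha> - \<delta>) |I n|\<close>. Discarding them and pigeonholing the finitely many
  patterns on \<open>[0, M (k+1)]\<close>, where \<open>I n \<subseteq> [0, M (k+1)]\<close>, gives \<open>S (k+1)\<close>. The set
  \<open>L\<close> of those \<open>x\<close> with \<open>S k + x \<subseteq> A\<close> for some \<open>k\<close> with \<open>x \<le> M k\<close> then has density at least
  \<open>\<alpha> - 1/(k+1)\<close> in \<open>I n\<close>, and a finite \<open>F \<subseteq> L\<close> satisfies \<open>S k + F \<subseteq> A\<close> for the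
  infinite set \<open>S k\<close>, \<open>k\<close> large.
\<close>

lemma sum_card_filter_swap:
  fixes A T X :: "nat set"
  assumes "finite T" "finite X"
  shows "(\<Sum>t\<in>T. card {x\<in>X. t + x \<in> A}) = (\<Sum>x\<in>X. card {t\<in>T. t + x \<in> A})"
proof -
  have card_filter: "card {y\<in>Y. P y} = (\<Sum>y\<in>Y. if P y then 1 else 0)" if "finite Y" for Y and P :: "nat \<Rightarrow> bool"
    using that by (simp flip: sum.inter_filter)
  show ?thesis
    using assms by (simp add: card_filter sum.swap[of _ T X])
qed

lemma card_Int_le_card_shift:
  fixes A :: "nat set"
  shows "card (A \<inter> {p..q}) \<le> card {t\<in>{p..q}. t + x \<in> A} + x"
proof -
  have "A \<inter> {p..q} \<subseteq> (\<lambda>t. t + x) ` {t\<in>{p..q}. t + x \<in> A} \<union> {p..<p+x}"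
  proof
    fix y assume y: "y \<in> A \<inter> {p..q}"
    show "y \<in> (\<lambda>t. t + x) ` {t\<in>{p..q}. t + x \<in> A} \<union> {p..<p+x}"
    proof (cases "y < p + x")
      case False
      then have "y - x \<in> {t\<in>{p..q}. t + x \<in> A}" "y = (y - x) + x" using y by auto
      then show ?thesis by blast
    qed (use y in auto)
  qed
  then have "card (A \<inter> {p..q}) \<le> card ((\<lambda>t. t + x) ` {t\<in>{p..q}. t + x \<in> A} \<union> {p..<p+x})"
    by (intro card_mono) auto
  also have "\<dots> \<le> card ((\<lambda>t. t + x) ` {t\<in>{p..q}. t + x \<in> A}) + card {p..<p+x}"
    by (rule card_Un_le)
  also have "\<dots> \<le> card {t\<in>{p..q}. t + x \<in> A} + x"
    using card_image_le[of "{t\<in>{p..q}. t + x \<in> A}" "\<lambda>t. t + x"] by simp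
  finally show ?thesis .
qed

lemma card_shift_le_card_Int:
  fixes A :: "nat set"
  shows "card {x\<in>{p..q}. t + x \<in> A} \<le> card (A \<inter> {t+p..t+q})"
proof -
  have "card {x\<in>{p..q}. t + x \<in> A} = card ((\<lambda>x. t + x) ` {x\<in>{p..q}. t + x \<in> A})"
    by (rule card_image[symmetric]) (auto simp: inj_on_def)
  also have "\<dots> \<le> card (A \<inter> {t+p..t+q})"
    by (intro card_mono) auto
  finally show ?thesis .
qed

text \<open>Double counting: averaged over \<open>t \<in> [p,q]\<close>, the set \<open>(A - t) \<inter> [p',q']\<close> has about
  \<open>\<alpha> |[p',q']|\<close> elements, and no translate has noticeably more, so few have noticeably less.\<close>
lemma card_sparse_shifts:
  fixes A :: "nat set" and p q p' q' :: nat and \<alpha> \<eta> \<delta> :: real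
  assumes "1 \<le> p'" "p' \<le> q'"
    and upper: "\<And>s. s \<ge> 1 \<Longrightarrow> real (card (A \<inter> {s..s+(q'-p')})) \<le> (\<alpha> + \<eta>) * real (q'-p')"
    and "\<eta> \<ge> 0" "\<alpha> > 0" "\<delta> > 0"
    and dense: "(\<alpha> - \<eta>) * real (card {p..q}) \<le> real (card (A \<inter> {p..q}))"
    and short: "real q' \<le> \<eta> * real (card {p..q})"
  shows "real (card {t\<in>{p..q}. real (card {x\<in>{p'..q'}. t + x \<in> A}) < (\<alpha> - \<delta>) * real (card {p'..q'})}) * \<delta>
          \<le> 3 * \<eta> * real (card {p..q})"
proof -
  define T where "T = {p..q}"
  define l where "l = real (card {p'..q'})"
  define f where "f t = card {x\<in>{p'..q'}. t + x \<in> A}" for t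
  define B where "B = {t\<in>T. real (f t) < (\<alpha> - \<delta>) * l}"
  have l_pos: "l > 0" and l_eq: "l = real (q' - p') + 1"
    using assms(1,2) unfolding l_def by simp_all
  have f_upper: "real (f t) \<le> (\<alpha> + \<eta>) * l" for t
  proof -
    have "f t \<le> card (A \<inter> {t+p'..(t+p')+(q'-p')})"
      using card_shift_le_card_Int[of p' q' t A] assms(2) unfolding f_def by simp
    then have "real (f t) \<le> (\<alpha> + \<eta>) * real (q' - p')"
      using upper[of "t + p'"] assms(1) by simp
    also have "\<dots> \<le> (\<alpha> + \<eta>) * l"
      using l_eq assms(4,5) by (intro mult_left_mono) auto
    finally show ?thesis .
  qed
  have finT: "finite T" and BT: "B \<subseteq> T" unfolding T_def B_def by auto
  have "(\<Sum>x\<in>{p'..q'}. real (card (A \<inter> T)) - real q') \<le> (\<Sum>x\<in>{p'..q'}. real (card {t\<in>T. t + x \<in> A}))"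
  proof (intro sum_mono)
    fix x assume "x \<in> {p'..q'}"
    then show "real (card (A \<inter> T)) - real q' \<le> real (card {t\<in>T. t + x \<in> A})"
      using card_Int_le_card_shift[of A p q x] unfolding T_def by simp
  qed
  also have "\<dots> = (\<Sum>t\<in>T. real (f t))"
    unfolding f_def using sum_card_filter_swap[of T "{p'..q'}" A] finT by (simp flip: of_nat_sum)
  also have "\<dots> = (\<Sum>t\<in>B. real (f t)) + (\<Sum>t\<in>T-B. real (f t))"
    using finT BT by (simp add: sum.subset_diff)
  also have "\<dots> \<le> (\<Sum>t\<in>B. (\<alpha> - \<delta>) * l) + (\<Sum>t\<in>T-B. (\<alpha> + \<eta>) * l)"
    by (intro add_mono sum_mono) (auto simp: B_def f_upper less_imp_le)
  also have "\<dots> = l * (real (card T) * (\<alpha> + \<eta>) - real (card B) * (\<delta> + \<eta>))"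
    using finT BT by (simp add: card_Diff_subset card_mono of_nat_diff finite_subset algebra_simps)
  finally have "l * (real (card (A \<inter> T)) - real q')
      \<le> l * (real (card T) * (\<alpha> + \<eta>) - real (card B) * (\<delta> + \<eta>))"
    unfolding l_def by simp
  then have "real (card (A \<inter> T)) - real q' \<le> real (card T) * (\<alpha> + \<eta>) - real (card B) * (\<delta> + \<eta>)"
    using l_pos by simp
  then have "real (card B) * (\<delta> + \<eta>) \<le> 3 * \<eta> * real (card T)"
    using dense short unfolding T_def by (simp add: algebra_simps)
  moreover have "real (card B) * \<delta> \<le> real (card B) * (\<delta> + \<eta>)"
    using assms(4) by (simp add: mult_left_mono)
  ultimately show ?thesis unfolding B_def f_def T_def l_def by simp
qed

lemma pigeonhole_card_fibre:
  assumes "finite G" "finite P" "P \<noteq> {}" "f ` G \<subseteq> P"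
  shows "\<exists>Q\<in>P. real (card G) / real (card P) \<le> real (card {t\<in>G. f t = Q})"
proof (rule ccontr)
  assume "\<not> ?thesis"
  then have small: "\<And>Q. Q \<in> P \<Longrightarrow> real (card {t\<in>G. f t = Q}) < real (card G) / real (card P)"
    by auto
  have "G = (\<Union>Q\<in>P. {t\<in>G. f t = Q})" using assms(4) by auto
  then have "real (card G) \<le> (\<Sum>Q\<in>P. real (card {t\<in>G. f t = Q}))"
    using card_UN_le[OF assms(2), of "\<lambda>Q. {t\<in>G. f t = Q}"] by (metis of_nat_le_iff of_nat_sum)
  also have "\<dots> < (\<Sum>Q\<in>P. real (card G) / real (card P))"
    using small assms(2,3) by (intro sum_strict_mono) auto
  also have "\<dots> = real (card G)" using assms(2,3) by simp
  finally show False by simp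
qed

lemma banach_density_window_bound:
  assumes "has_banach_density A \<alpha>" "\<eta> > 0"
  shows "\<exists>D. \<forall>d\<ge>D. \<forall>s\<ge>1. real (card (A \<inter> {s..s+d})) \<le> (\<alpha> + \<eta>) * real d"
proof -
  have "\<forall>\<^sub>F d in sequentially. (SUP m\<in>{1::nat..}. real (card (A \<inter> {m..m+d})) / real d) < \<alpha> + \<eta>"
    using assms unfolding has_banach_density_def by (intro order_tendstoD(2)) auto
  then obtain D where D: "\<And>d. d \<ge> D \<Longrightarrow> (SUP m\<in>{1::nat..}. real (card (A \<inter> {m..m+d})) / real d) < \<alpha> + \<eta>"
    by (auto simp: eventually_sequentially)
  show ?thesis
  proof (intro exI[of _ "max D 1"] allI impI)
    fix d s :: nat assume d: "max D 1 \<le> d" and s: "1 \<le> s"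
    have "bdd_above ((\<lambda>m. real (card (A \<inter> {m..m+d})) / real d) ` {1..})"
    proof (rule bdd_aboveI2)
      fix m
      have "card (A \<inter> {m..m+d}) \<le> card {m..m+d}" by (intro card_mono) auto
      then show "real (card (A \<inter> {m..m+d})) / real d \<le> real (d+1) / real d"
        by (intro divide_right_mono) auto
    qed
    then have "real (card (A \<inter> {s..s+d})) / real d \<le> (SUP m\<in>{1::nat..}. real (card (A \<inter> {m..m+d})) / real d)"
      using s by (intro cSUP_upper) auto
    also have "\<dots> < \<alpha> + \<eta>" using D d by simp
    finally show "real (card (A \<inter> {s..s+d})) \<le> (\<alpha> + \<eta>) * real d"
      using d by (simp add: divide_less_eq)
  qed
qed

lemma ereal_le_limsup:
  fixes g :: "nat \<Rightarrow> real"
  assumes "\<And>k. \<exists>n\<ge>k. \<alpha> - 1 / real (Suc k) \<le> g n"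
  shows "ereal \<alpha> \<le> limsup (\<lambda>n. ereal (g n))"
  unfolding limsup_INF_SUP
proof (rule INF_greatest)
  fix N
  show "ereal \<alpha> \<le> Sup ((\<lambda>n. ereal (g n)) ` {N..})"
  proof (rule ereal_le_epsilon2)
    fix e :: real assume e: "0 < e"
    obtain k0 where k0: "1 / real (Suc k0) < e" using e nat_approx_posE by blast
    define k where "k = max k0 N"
    have "1 / real (Suc k) \<le> 1 / real (Suc k0)" unfolding k_def by (simp add: frac_le)
    obtain n where n: "n \<ge> k" "\<alpha> - 1 / real (Suc k) \<le> g n" using assms by blast
    have "ereal (g n) \<le> Sup ((\<lambda>n. ereal (g n)) ` {N..})"
      using n unfolding k_def by (intro Sup_upper) auto
    moreover have "ereal \<alpha> \<le> ereal (g n) + ereal e"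
      using n k0 \<open>1 / real (Suc k) \<le> 1 / real (Suc k0)\<close> by simp
    ultimately show "ereal \<alpha> \<le> Sup ((\<lambda>n. ereal (g n)) ` {N..}) + ereal e"
      by (metis add_right_mono order_trans)
  qed
qed

locale dense_interval_sequence =
  fixes A :: "nat set" and \<alpha> :: real and a b :: "nat \<Rightarrow> nat"
  assumes A_pos: "A \<subseteq> {1..}"
    and BD: "has_banach_density A \<alpha>"
    and alpha_pos: "\<alpha> > 0"
    and I_pos: "\<And>n. a n \<ge> 1"
    and I_len: "filterlim (\<lambda>n. real (card {a n..b n})) at_top sequentially"
    and I_dens: "((\<lambda>n. real (card (A \<inter> {a n..b n})) / real (card {a n..b n})) \<longlongrightarrow> \<alpha>) sequentially"
begin

definition frequently_dense :: "nat set \<Rightarrow> real \<Rightarrow> bool" where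
  "frequently_dense S c \<longleftrightarrow>
     (\<exists>\<^sub>F m in sequentially. c * real (card {a m..b m}) \<le> real (card (S \<inter> {a m..b m})))"

definition coherent :: "nat set \<Rightarrow> nat \<Rightarrow> bool" where
  "coherent S M \<longleftrightarrow> S \<subseteq> A \<and> (\<forall>t\<in>S. \<forall>t'\<in>S. \<forall>x\<le>M. t + x \<in> A \<longleftrightarrow> t' + x \<in> A) \<and>
     (\<exists>c>0. frequently_dense S c)"

lemma frequently_dense_infinite:
  assumes "frequently_dense S c" "c > 0"
  shows "infinite S"
proof
  assume fin: "finite S"
  have "\<forall>\<^sub>F m in sequentially. real (card S) / c < real (card {a m..b m})"
    using I_len by (simp add: filterlim_at_top_dense)
  then have "\<forall>\<^sub>F m in sequentially. real (card S) < c * real (card {a m..b m})"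
    by eventually_elim (use assms(2) in \<open>simp add: pos_divide_less_eq mult.commute del: card_atLeastAtMost\<close>)
  from frequently_eventually_frequently[OF assms(1)[unfolded frequently_dense_def] this]
  obtain m where "c * real (card {a m..b m}) \<le> real (card (S \<inter> {a m..b m}))"
    "real (card S) < c * real (card {a m..b m})"
    by (blast dest: frequently_ex)
  moreover have "card (S \<inter> {a m..b m}) \<le> card S" using fin by (simp add: card_mono)
  ultimately show False by linarith
qed

lemma frequently_dense_A: "frequently_dense A (\<alpha> / 2)"
proof -
  have "\<forall>\<^sub>F m in sequentially. real (card {a m..b m}) > 0"
    using I_len[unfolded filterlim_at_top_dense] by blast
  moreover have "\<forall>\<^sub>F m in sequentially. \<alpha> / 2 < real (card (A \<inter> {a m..b m})) / real (card {a m..b m})"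
    using I_dens alpha_pos by (intro order_tendstoD(1)) auto
  ultimately have "\<forall>\<^sub>F m in sequentially. \<alpha> / 2 * real (card {a m..b m}) \<le> real (card (A \<inter> {a m..b m}))"
    by eventually_elim (simp add: less_divide_eq less_imp_le)
  then show ?thesis
    unfolding frequently_dense_def by (simp add: eventually_frequently)
qed

lemma coherent_A: "coherent A 0"
  using frequently_dense_A alpha_pos unfolding coherent_def by (intro conjI exI[of _ "\<alpha> / 2"]) auto

lemma frequently_dense_remove_sparse:
  assumes "frequently_dense S c"
    and "\<forall>\<^sub>F m in sequentially. real (card {t\<in>{a m..b m}. \<not> P t}) \<le> c / 2 * real (card {a m..b m})"
  shows "frequently_dense {t\<in>S. P t} (c / 2)"
  unfolding frequently_dense_def
  using frequently_eventually_frequently[OF assms(1)[unfolded frequently_dense_def] assms(2)]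
proof (rule frequently_elim1)
  fix m
  have "card (S \<inter> {a m..b m}) \<le> card ({t\<in>S. P t} \<inter> {a m..b m} \<union> {t\<in>{a m..b m}. \<not> P t})"
    by (intro card_mono) auto
  also have "\<dots> \<le> card ({t\<in>S. P t} \<inter> {a m..b m}) + card {t\<in>{a m..b m}. \<not> P t}"
    by (rule card_Un_le)
  finally show "c * real (card {a m..b m}) \<le> real (card (S \<inter> {a m..b m})) \<and>
      real (card {t\<in>{a m..b m}. \<not> P t}) \<le> c / 2 * real (card {a m..b m}) \<Longrightarrow>
      c / 2 * real (card {a m..b m}) \<le> real (card ({t\<in>S. P t} \<inter> {a m..b m}))"
    by linarith
qed

text \<open>Pigeonhole over the \<open>2 ^ (M + 1)\<close> possible patterns \<open>(A - t) \<inter> [0,M]\<close>.\<close>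
lemma exists_coherent_subset:
  assumes "S \<subseteq> A" "c > 0" "frequently_dense S c"
  shows "\<exists>S'\<subseteq>S. coherent S' M"
proof -
  define pattern where "pattern t = {x\<in>{0..M}. t + x \<in> A}" for t
  define c' where "c' = c / 2 ^ (M + 1)"
  have c'_pos: "c' > 0" using assms(2) unfolding c'_def by simp
  have "\<exists>\<^sub>F m in sequentially. \<exists>Q\<in>Pow {0..M}.
      c' * real (card {a m..b m}) \<le> real (card {t\<in>S \<inter> {a m..b m}. pattern t = Q})"
    using assms(3) unfolding frequently_dense_def
  proof (rule frequently_elim1)
    fix m assume m: "c * real (card {a m..b m}) \<le> real (card (S \<inter> {a m..b m}))"
    have "finite (S \<inter> {a m..b m})" "finite (Pow {0..M})" "Pow {0..M} \<noteq> {}"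
      "pattern ` (S \<inter> {a m..b m}) \<subseteq> Pow {0..M}"
      unfolding pattern_def by auto
    from pigeonhole_card_fibre[OF this] obtain Q where "Q \<in> Pow {0..M}"
      and fibre: "real (card (S \<inter> {a m..b m})) / real (card (Pow {0..M}))
        \<le> real (card {t\<in>S \<inter> {a m..b m}. pattern t = Q})"
      by blast
    have le: "c' * real (card {a m..b m}) \<le> real (card (S \<inter> {a m..b m})) / real (card (Pow {0..M}))"
      using divide_right_mono[OF m, of "2 ^ (M + 1)"] unfolding c'_def by (simp add: card_Pow)
    show "\<exists>Q\<in>Pow {0..M}. c' * real (card {a m..b m}) \<le> real (card {t\<in>S \<inter> {a m..b m}. pattern t = Q})"
      using \<open>Q \<in> Pow {0..M}\<close> order_trans[OF le fibre] by blast
  qed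
  from frequently_bex_finite[OF _ this] obtain Q where "\<exists>\<^sub>F m in sequentially.
      c' * real (card {a m..b m}) \<le> real (card {t\<in>S \<inter> {a m..b m}. pattern t = Q})"
    by blast
  moreover have "{t\<in>S \<inter> {a m..b m}. pattern t = Q} = {t\<in>S. pattern t = Q} \<inter> {a m..b m}" for m
    by auto
  ultimately have "frequently_dense {t\<in>S. pattern t = Q} c'"
    unfolding frequently_dense_def by simp
  moreover have "t + x \<in> A \<longleftrightarrow> t' + x \<in> A" if "pattern t = pattern t'" "x \<le> M" for t t' x
  proof -
    have "x \<in> pattern t \<longleftrightarrow> x \<in> pattern t'" using that(1) by simp
    then show ?thesis using that(2) unfolding pattern_def by simp
  qed
  ultimately have "coherent {t\<in>S. pattern t = Q} M"
    using assms(1) c'_pos unfolding coherent_def by auto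
  then show ?thesis by (intro exI[of _ "{t\<in>S. pattern t = Q}"] conjI) auto
qed
lemma eventually_few_sparse_shifts:
  assumes "\<delta> > 0" "\<epsilon> > 0"
  shows "\<forall>\<^sub>F n in sequentially. a n \<le> b n \<and>
    (\<forall>\<^sub>F m in sequentially. real (card {t\<in>{a m..b m}.
        real (card {x\<in>{a n..b n}. t + x \<in> A}) < (\<alpha> - \<delta>) * real (card {a n..b n})})
      \<le> \<epsilon> * real (card {a m..b m}))"
proof -
  define \<eta> where "\<eta> = \<delta> * \<epsilon> / 3"
  have \<eta>: "\<eta> > 0" unfolding \<eta>_def using assms by simp
  obtain D where D: "\<And>d s. d \<ge> D \<Longrightarrow> s \<ge> 1 \<Longrightarrow> real (card (A \<inter> {s..s+d})) \<le> (\<alpha> + \<eta>) * real d"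
    using banach_density_window_bound[OF BD \<eta>] by blast
  have "\<forall>\<^sub>F n in sequentially. real (D + 1) \<le> real (card {a n..b n})"
    using I_len by (simp add: filterlim_at_top)
  then show ?thesis
  proof eventually_elim
    case (elim n)
    then have n: "a n \<le> b n" "D \<le> b n - a n" by auto
    then have window: "\<And>s. s \<ge> 1 \<Longrightarrow> real (card (A \<inter> {s..s+(b n - a n)})) \<le> (\<alpha> + \<eta>) * real (b n - a n)"
      using D by blast
    define l where "l m = real (card {a m..b m})" for m
    have "\<forall>\<^sub>F m in sequentially. l m \<ge> real (b n) / \<eta>"
      unfolding l_def using I_len[unfolded filterlim_at_top] by blast
    moreover have "\<forall>\<^sub>F m in sequentially. l m > 0"
      unfolding l_def using I_len[unfolded filterlim_at_top_dense] by blast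
    moreover have "\<forall>\<^sub>F m in sequentially. \<alpha> - \<eta> < real (card (A \<inter> {a m..b m})) / l m"
      unfolding l_def using I_dens \<eta> by (intro order_tendstoD(1)) auto
    ultimately have "\<forall>\<^sub>F m in sequentially. real (card {t\<in>{a m..b m}.
        real (card {x\<in>{a n..b n}. t + x \<in> A}) < (\<alpha> - \<delta>) * real (card {a n..b n})}) \<le> \<epsilon> * l m"
    proof eventually_elim
      case (elim m)
      have dense: "(\<alpha> - \<eta>) * real (card {a m..b m}) \<le> real (card (A \<inter> {a m..b m}))"
        using elim unfolding l_def by (simp add: less_divide_eq less_imp_le)
      have short: "real (b n) \<le> \<eta> * real (card {a m..b m})"
        using elim \<eta> unfolding l_def by (simp add: divide_le_eq mult.commute)
      have "real (card {t\<in>{a m..b m}.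
          real (card {x\<in>{a n..b n}. t + x \<in> A}) < (\<alpha> - \<delta>) * real (card {a n..b n})}) * \<delta>
          \<le> 3 * \<eta> * l m"
        unfolding l_def
        using card_sparse_shifts[OF I_pos n(1) window less_imp_le[OF \<eta>] alpha_pos assms(1) dense short] .
      also have "3 * \<eta> * l m = (\<epsilon> * l m) * \<delta>"
        unfolding \<eta>_def by simp
      finally show ?case using assms(1) by simp
    qed
    with n show ?case unfolding l_def by simp
  qed
qed

lemma coherent_step:
  assumes "coherent S M"
  shows "\<exists>S' M' n. coherent S' M' \<and> S' \<subseteq> S \<and> M \<le> M' \<and> k \<le> n \<and> a n \<le> b n \<and> b n \<le> M' \<and>
    (\<forall>t\<in>S'. (\<alpha> - 1 / real (Suc k)) * real (card {a n..b n}) \<le> real (card {x\<in>{a n..b n}. t + x \<in> A}))"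
proof -
  obtain c where "S \<subseteq> A" "c > 0" "frequently_dense S c"
    using assms unfolding coherent_def by blast
  obtain N where N: "\<And>n. n \<ge> N \<Longrightarrow> a n \<le> b n \<and>
    (\<forall>\<^sub>F m in sequentially. real (card {t\<in>{a m..b m}.
        real (card {x\<in>{a n..b n}. t + x \<in> A}) < (\<alpha> - 1 / real (Suc k)) * real (card {a n..b n})})
      \<le> c / 2 * real (card {a m..b m}))"
    using eventually_few_sparse_shifts[of "1 / real (Suc k)" "c / 2"] \<open>c > 0\<close>
    unfolding eventually_sequentially by auto
  define n where "n = max N k"
  have "k \<le> n" "N \<le> n" unfolding n_def by auto
  note n = N[OF \<open>N \<le> n\<close>]
  define good where "good t \<longleftrightarrow>
    (\<alpha> - 1 / real (Suc k)) * real (card {a n..b n}) \<le> real (card {x\<in>{a n..b n}. t + x \<in> A})" for t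
  have "frequently_dense {t\<in>S. good t} (c / 2)"
    using n unfolding good_def not_le[symmetric]
    by (intro frequently_dense_remove_sparse[OF \<open>frequently_dense S c\<close>]) auto
  moreover have "{t\<in>S. good t} \<subseteq> A" "c / 2 > 0" using \<open>S \<subseteq> A\<close> \<open>c > 0\<close> by auto
  ultimately obtain S' where "S' \<subseteq> {t\<in>S. good t}" "coherent S' (max M (b n))"
    using exists_coherent_subset by metis
  then show ?thesis
    using n \<open>k \<le> n\<close> unfolding good_def
    by (intro exI[of _ S'] exI[of _ "max M (b n)"] exI[of _ n]) auto
qed

end

locale nested_coherent_sets = dense_interval_sequence +
  fixes S :: "nat \<Rightarrow> nat set" and M n :: "nat \<Rightarrow> nat"
  assumes coherent: "\<And>k. coherent (S k) (M k)"
    and S_Suc: "\<And>k. S (Suc k) \<subseteq> S k"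
    and M_Suc: "\<And>k. M k \<le> M (Suc k)"
    and n_ge: "\<And>k. k \<le> n k"
    and I_n_nonempty: "\<And>k. a (n k) \<le> b (n k)"
    and I_n_le_M: "\<And>k. b (n k) \<le> M k"
    and I_n_dense: "\<And>k. \<forall>t\<in>S k. (\<alpha> - 1 / real (Suc k)) * real (card {a (n k)..b (n k)})
        \<le> real (card {x\<in>{a (n k)..b (n k)}. t + x \<in> A})"

context dense_interval_sequence
begin

lemma nested_coherent_sets_exist: "\<exists>S M n. nested_coherent_sets A \<alpha> a b S M n"
proof -
  define P where "P k \<equiv> \<lambda>(S, M, n). coherent S M \<and> k \<le> n \<and> a n \<le> b n \<and> b n \<le> M \<and>
    (\<forall>t\<in>S. (\<alpha> - 1 / real (Suc k)) * real (card {a n..b n}) \<le> real (card {x\<in>{a n..b n}. t + x \<in> A}))"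
    for k
  define Q where "Q \<equiv> \<lambda>(S :: nat set, M :: nat, _ :: nat) (S', M', _ :: nat). S' \<subseteq> S \<and> M \<le> M'"
  have "\<exists>f. \<forall>k. P k (f k) \<and> Q (f k) (f (Suc k))"
  proof (rule dependent_nat_choice)
    show "\<exists>x. P 0 x"
      using coherent_step[OF coherent_A, of 0] unfolding P_def by auto
  next
    fix x k assume "P k x"
    then show "\<exists>y. P (Suc k) y \<and> Q x y"
      using coherent_step[of _ _ "Suc k"] unfolding P_def Q_def by (cases x) fastforce
  qed
  then obtain f where f: "\<And>k. P k (f k) \<and> Q (f k) (f (Suc k))" by blast
  note f = f[unfolded P_def Q_def case_prod_beta]
  show ?thesis
    by (intro exI[of _ "\<lambda>k. fst (f k)"] exI[of _ "\<lambda>k. fst (snd (f k))"] exI[of _ "\<lambda>k. snd (snd (f k))"]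
        nested_coherent_sets.intro[OF dense_interval_sequence_axioms] nested_coherent_sets_axioms.intro)
      (use f in blast)+
qed

end

context nested_coherent_sets
begin

definition common_returns :: "nat set" where
  "common_returns = {x. x \<ge> 1 \<and> (\<exists>k. x \<le> M k \<and> (\<forall>t\<in>S k. t + x \<in> A))}"

lemma S_infinite: "infinite (S k)"
  using coherent[of k] frequently_dense_infinite unfolding coherent_def by blast

lemma S_antimono: "i \<le> j \<Longrightarrow> S j \<subseteq> S i"
  by (rule lift_Suc_antimono_le[of S, OF S_Suc])

lemma M_mono: "i \<le> j \<Longrightarrow> M i \<le> M j"
  by (rule lift_Suc_mono_le[of M, OF M_Suc])

text \<open>Membership of \<open>t + x\<close> in \<open>A\<close> is decided by any one element of a later, smaller \<open>S k'\<close>.\<close>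
lemma common_returns_shift:
  assumes "x \<in> common_returns" "x \<le> M k" "t \<in> S k"
  shows "t + x \<in> A"
proof -
  obtain k' where k': "x \<le> M k'" "\<forall>t\<in>S k'. t + x \<in> A"
    using assms(1) unfolding common_returns_def by blast
  obtain t0 where "t0 \<in> S (max k k')"
    using S_infinite by (metis finite.emptyI ex_in_conv)
  then have "t0 \<in> S k" "t0 \<in> S k'"
    using S_antimono[of k "max k k'"] S_antimono[of k' "max k k'"] by auto
  then show ?thesis
    using k' coherent[of k] assms(2,3) unfolding coherent_def by blast
qed

lemma limsup_density_common_returns:
  "ereal \<alpha> \<le> limsup (\<lambda>m. ereal (real (card (common_returns \<inter> {a m..b m})) / real (card {a m..b m})))"
proof (rule ereal_le_limsup)
  fix k
  obtain t where t: "t \<in> S k"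
    using S_infinite by (metis finite.emptyI ex_in_conv)
  have "{x\<in>{a (n k)..b (n k)}. t + x \<in> A} \<subseteq> common_returns \<inter> {a (n k)..b (n k)}"
  proof
    fix x assume x: "x \<in> {x\<in>{a (n k)..b (n k)}. t + x \<in> A}"
    then have "1 \<le> x" "x \<le> M k" using I_pos[of "n k"] I_n_le_M[of k] by auto
    moreover have "\<forall>t'\<in>S k. t' + x \<in> A"
      using coherent[of k] x t \<open>x \<le> M k\<close> unfolding coherent_def by blast
    ultimately show "x \<in> common_returns \<inter> {a (n k)..b (n k)}"
      using x unfolding common_returns_def by blast
  qed
  then have "(\<alpha> - 1 / real (Suc k)) * real (card {a (n k)..b (n k)})
      \<le> real (card (common_returns \<inter> {a (n k)..b (n k)}))"
    using I_n_dense[of k] t by (meson card_mono finite_Int finite_atLeastAtMost of_nat_le_iff order_trans)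
  then have "\<alpha> - 1 / real (Suc k)
      \<le> real (card (common_returns \<inter> {a (n k)..b (n k)})) / real (card {a (n k)..b (n k)})"
    using I_n_nonempty[of k] by (simp add: le_divide_eq)
  then show "\<exists>m\<ge>k. \<alpha> - 1 / real (Suc k)
      \<le> real (card (common_returns \<inter> {a m..b m})) / real (card {a m..b m})"
    using n_ge by blast
qed

lemma common_returns_intersection_infinite:
  assumes "finite F" "F \<subseteq> common_returns"
  shows "infinite (A \<inter> (\<Inter>x\<in>F. shift_set A x))"
proof -
  obtain K where K: "\<forall>x\<in>F. x \<le> M K"
    using assms
  proof (induction F arbitrary: thesis rule: finite_induct)
    case (insert y F)
    obtain K where "\<forall>x\<in>F. x \<le> M K" using insert by blast
    moreover obtain K' where "y \<le> M K'" using insert.prems unfolding common_returns_def by blast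
    ultimately have "\<forall>x\<in>insert y F. x \<le> M (max K K')"
      using M_mono[of K "max K K'"] M_mono[of K' "max K K'"] by fastforce
    then show ?case by (rule insert.prems(1))
  qed simp
  have "S K \<subseteq> A \<inter> (\<Inter>x\<in>F. shift_set A x)"
  proof
    fix t assume t: "t \<in> S K"
    then have "t \<in> A" using coherent[of K] unfolding coherent_def by blast
    moreover have "t \<in> shift_set A x" if "x \<in> F" for x
      using common_returns_shift[of x K t] A_pos \<open>t \<in> A\<close> that K assms(2) t
      unfolding shift_set_def by auto
    ultimately show "t \<in> A \<inter> (\<Inter>x\<in>F. shift_set A x)" by blast
  qed
  then show ?thesis using S_infinite infinite_super by blast
qed

end

theorem lemma3p3:
  fixes A :: "nat set" and \<alpha> :: real and a b :: "nat \<Rightarrow> nat"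
  assumes A_pos: "A \<subseteq> {1..}"
    and BD: "has_banach_density A \<alpha>"
    and alpha_pos: "\<alpha> > 0"
    and I_pos: "\<And>n. a n \<ge> 1"
    and I_len: "filterlim (\<lambda>n. real (card {a n..b n})) at_top sequentially"
    and I_dens: "((\<lambda>n. real (card (A \<inter> {a n..b n})) / real (card {a n..b n})) \<longlongrightarrow> \<alpha>) sequentially"
  shows "\<exists>L. L \<subseteq> {1..} \<and>
           limsup (\<lambda>n. ereal (real (card (L \<inter> {a n..b n})) / real (card {a n..b n}))) \<ge> ereal \<alpha> \<and>
           (\<forall>F. finite F \<and> F \<subseteq> L \<longrightarrow> infinite (A \<inter> (\<Inter>x\<in>F. shift_set A x)))"
proof -
  interpret dense_interval_sequence A \<alpha> a b
    using assms by unfold_locales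
  obtain S M n where "nested_coherent_sets A \<alpha> a b S M n"
    using nested_coherent_sets_exist by blast
  then interpret nested_coherent_sets A \<alpha> a b S M n .
  show ?thesis
    using limsup_density_common_returns common_returns_intersection_infinite
    by (intro exI[of _ common_returns]) (auto simp: common_returns_def)
qed

end
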